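(* Let $\mathcal{G}(t)$ be a matrix-weighted switching network satisfying Assumption 1 (described in the context), and consider $\dot{\boldsymbol{x}}(t)=-L(t)\boldsymbol{x}(t)$, $\boldsymbol{x}(t)\in\mathbb{R}^{dn}$. Suppose there exist a subsequence $\{t_{k_l}\}_{l\in\mathbb{N}}$ of $\{t_k\}$ with $t_{k_0}=t_0=0$ and $\Delta t_{k_l}=t_{k_{l+1}}-t_{k_l}<\infty$, and a scalar $q\in(0,1)$, such that for all $l\in\mathbb{N}$, $$\mathrm{null}(\widetilde{L}_{[t_{k_l},t_{k_{l+1}})})=\mathrm{null}(\widetilde{L}_{[t_{k_{l+1}},t_{k_{l+2}})})$$ and $$\mu_{m+1}\big(\Phi(t_{k_{l+1}},t_{k_l})^\top\Phi(t_{k_{l+1}},t_{k_l})\big)\le q,$$ where $m=\dim\mathrm{null}(\widetilde{L}_{[t_{k_l},t_{k_{l+1}})})$. Then the system admits cluster consensus. Moreover, writing $\mathrm{null}(\widetilde{L}_{[t_{k_l},t_{k_{l+1}})})=\mathrm{span}\{\boldsymbol{\xi}_1,\dots,\boldsymbol{\xi}_m\}$ (for all $l$) with $\boldsymbol{\xi}_i^\top\boldsymbol{\xi}_j=1$ if $i=j$ and $0$ otherwise, the cluster consensus value is $$\boldsymbol{x}^*=\sum_{i=1}^{m}(\boldsymbol{\xi}_i^\top\boldsymbol{x}(0))\boldsymbol{\xi}_i.$$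
   Context: A matrix-weighted switching network $\mathcal{G}(t)=(\mathcal{V},\mathcal{E}(t),A(t))$ has node set $\mathcal{V}=\{1,\dots,n\}$, $n>1$; each edge $(i,j)\in\mathcal{E}(t)$ carries a symmetric weight $A_{ij}(t)\in\mathbb{R}^{d\times d}$ which is either positive (semi-)definite or negative (semi-)definite, with $A_{ij}=A_{ji}$, $A_{ii}=0$, $A_{ij}(t)=0$ if $(i,j)\notin\mathcal{E}(t)$; standing assumption: for each pair $(i,j)$ the weight $A_{ij}(t)$ has the same sign type for all $t$. Set $|A_{ij}|=A_{ij}$ if $A_{ij}\succeq0$ and $-A_{ij}$ if $A_{ij}\preceq0$; $\mathrm{sgn}(A)$ is $1$, $-1$, $0$ for nonzero PSD, nonzero NSD, zero $A$. With $A=[A_{ij}]\in\mathbb{R}^{dn\times dn}$ and $D=\mathrm{diag}(D_1,\dots,D_n)$, $D_i=\sum_{j:(i,j)\in\mathcal{E}}|A_{ij}|$, the matrix-valued Laplacian is $L=D-A$; $\dot{\boldsymbol{x}}=-L(t)\boldsymbol{x}$ is the stacked form of $\dot{\boldsymbol{x}}_i=-\sum_j|A_{ij}|(\boldsymbol{x}_i-\mathrm{sgn}(A_{ij})\boldsymbol{x}_j)$, $\boldsymbol{x}=[\boldsymbol{x}_1^\top,\dots,\boldsymbol{x}_n^\top]^\top$. Assumption 1: there is a sequence $\{t_k\}_{k\in\mathbb{N}}$ with $t_0=0$, $t_k\to\infty$, $t_{k+1}-t_k\ge\alpha>0$, and $\mathcal{G}(t)$ is constant on each $[t_k,t_{k+1})$,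 with Laplacian $L^k$ there and $\Delta t_k=t_{k+1}-t_k$. For $k'<k''$: $\widetilde{L}_{[t_{k'},t_{k''})}=\frac{1}{t_{k''}-t_{k'}}\int_{t_{k'}}^{t_{k''}}L(t)dt$ (Laplacian of the integral network), and $\Phi(t_{k''},t_{k'})=e^{-L^{k''-1}\Delta t_{k''-1}}\cdots e^{-L^{k'}\Delta t_{k'}}$. For a symmetric PSD matrix $P=\Phi^\top\Phi\in\mathbb{R}^{dn\times dn}$ with at least $m$ eigenvalues equal to 1, $\mu_{m+1}(P)$ denotes the $(m+1)$-th largest eigenvalue of $P$. Cluster consensus: there is a partition $\mathcal{V}_1,\dots,\mathcal{V}_l$ of $\mathcal{V}$ such that all limits $\lim_{t\to\infty}\boldsymbol{x}_i(t)$ exist, agents in the same part have equal limits, and agents in different parts have different limits. *)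

theory Defs
  imports "HOL-Analysis.Analysis" "HOL-Library.Disjoint_Sets"
begin

text \<open>Agents are indexed by a finite type 'n (n = CARD('n)), components of the
local states by a finite type 'd (d = CARD('d)). The stacked state in R^(dn) is a
vector indexed by pairs (i,a) :: 'n \<times> 'd; block i of it is the state of agent i.\<close>

definition block :: "real^('n::finite \<times> 'd::finite) \<Rightarrow> 'n \<Rightarrow> real^'d" where
  "block x i = (\<chi> a. x $ (i, a))"

definition psd :: "real^'k::finite^'k \<Rightarrow> bool" where
  "psd M \<longleftrightarrow> (\<forall>v. 0 \<le> v \<bullet> (M *v v))"

definition nsd :: "real^'k::finite^'k \<Rightarrow> bool" where
  "nsd M \<longleftrightarrow> (\<forall>v. v \<bullet> (M *v v) \<le> 0)"

definition mabs :: "real^'k::finite^'k \<Rightarrow> real^'k^'k" where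
  "mabs M = (if psd M then M else - M)"

text \<open>Matrix-valued Laplacian L = D - A of the matrix-weighted network with weights
W i j :: real^'d^'d (W i j = 0 when (i,j) is not an edge), D_i = sum_j |W i j|.\<close>
definition lap :: "('n::finite \<Rightarrow> 'n \<Rightarrow> real^'d::finite^'d) \<Rightarrow> real^('n \<times> 'd)^('n \<times> 'd)" where
  "lap W = (\<chi> p q. (if fst p = fst q then (\<Sum>j\<in>UNIV. mabs (W (fst p) j)) $ snd p $ snd q else 0)
                     - W (fst p) (fst q) $ snd p $ snd q)"

definition matpow :: "real^'k::finite^'k \<Rightarrow> nat \<Rightarrow> real^'k^'k" where
  "matpow M j = (((**) M) ^^ j) (mat 1)"

definition mexp :: "real^'k::finite^'k \<Rightarrow> real^'k^'k" where
  "mexp M = (\<Sum>j. (1 / (fact j :: real)) *\<^sub>R matpow M j)"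

definition Ltilde :: "(real \<Rightarrow> 'n::finite \<Rightarrow> 'n \<Rightarrow> real^'d::finite^'d) \<Rightarrow> real \<Rightarrow> real
    \<Rightarrow> real^('n \<times> 'd)^('n \<times> 'd)" where
  "Ltilde W a b = (1 / (b - a)) *\<^sub>R integral {a..b} (\<lambda>t. lap (W t))"

definition Phi :: "(real \<Rightarrow> 'n::finite \<Rightarrow> 'n \<Rightarrow> real^'d::finite^'d) \<Rightarrow> (nat \<Rightarrow> real) \<Rightarrow> nat \<Rightarrow> nat
    \<Rightarrow> real^('n \<times> 'd)^('n \<times> 'd)" where
  "Phi W tk k2 k1 = fold (\<lambda>k P. mexp (- ((tk (Suc k) - tk k) *\<^sub>R lap (W (tk k)))) ** P) [k1..<k2] (mat 1)"

definition null_space :: "real^'k::finite^'k \<Rightarrow> (real^'k) set" where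
  "null_space M = {v. M *v v = 0}"

text \<open>Eigenvalues, multiplicity (dimension of the eigenspace; for the symmetric
matrices considered this is the usual multiplicity), and the list of eigenvalues
in non-increasing order, repeated according to multiplicity.\<close>
definition eigvals :: "real^'k::finite^'k \<Rightarrow> real set" where
  "eigvals M = {e. \<exists>v. v \<noteq> 0 \<and> M *v v = e *\<^sub>R v}"

definition eig_mult :: "real^'k::finite^'k \<Rightarrow> real \<Rightarrow> nat" where
  "eig_mult M e = dim {v. M *v v = e *\<^sub>R v}"

definition eig_desc :: "real^'k::finite^'k \<Rightarrow> real list" where
  "eig_desc M = rev (concat (map (\<lambda>e. replicate (eig_mult M e) e) (sorted_list_of_set (eigvals M))))"

text \<open>mu k M: the k-th largest eigenvalue (k \<ge> 1).\<close>
definition mu :: "nat \<Rightarrow> real^'k::finite^'k \<Rightarrow> real" where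
  "mu k M = eig_desc M ! (k - 1)"

definition cluster_consensus :: "(real \<Rightarrow> real^('n::finite \<times> 'd::finite)) \<Rightarrow> bool" where
  "cluster_consensus x \<longleftrightarrow>
     (\<exists>P c. partition_on (UNIV :: 'n set) P \<and>
        (\<forall>i. ((\<lambda>t. block (x t) i) \<longlongrightarrow> c i) at_top) \<and>
        (\<forall>p\<in>P. \<forall>p'\<in>P. \<forall>i\<in>p. \<forall>j\<in>p'. (c i = c j \<longleftrightarrow> p = p')))"

end

(*
  Every Laplacian L^k is symmetric positive semidefinite, and the integral Laplacian of a window
  [t_{k_l}, t_{k_{l+1}}) is a positive combination of the L^k in it, so a vector in its null space
  is annihilated by each of them. Since all windows share the null space N, every flow e^{-s L^k}
  is symmetric, fixes N pointwise and does not increase norms. Hence the N-component of x(t) is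
  conserved: with p the orthogonal projection of x(0) onto N, x(t) - p stays orthogonal to N and
  |x(t) - p| is nonincreasing. Over a window, P = Phi^T Phi fixes N, which accounts for dim N
  eigenvalues equal to 1, so mu_{m+1}(P) <= q leaves only eigenvalues at most q on the orthogonal
  complement of N: |x - p|^2 shrinks by the factor q per window. Thus x(t) -> p, and the agents
  cluster according to the blocks of p.
*)

theory Submission
  imports Defs
begin

section \<open>Symmetric matrices and orthonormal eigenbases\<close>

lemma matrix_vector_mult_sum_left: "(\<Sum>i\<in>I. A i) *v v = (\<Sum>i\<in>I. A i *v (v::real^'k::finite))"
  by (induction I rule: infinite_finite_induct) (auto simp: matrix_vector_mult_add_rdistrib)

lemma matrix_vector_mult_sum_right: "A *v (\<Sum>i\<in>I. f i) = (\<Sum>i\<in>I. A *v (f i::real^'k::finite))"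
  by (induction I rule: infinite_finite_induct) (auto simp: matrix_vector_right_distrib)

lemma scaleR_matrix_vector_mult: "(c *\<^sub>R A) *v v = c *\<^sub>R (A *v (v::real^'k::finite))"
  by (simp add: scaleR_matrix_vector_assoc)

lemma uminus_matrix_vector_mult: "(- A) *v x = - (A *v (x::real^'k::finite))"
  by (simp add: matrix_vector_mult_def vec_eq_iff sum_negf)

lemma symmetric_matrix_inner:
  fixes M :: "real^'k::finite^'k"
  assumes "transpose M = M"
  shows "(M *v x) \<bullet> y = x \<bullet> (M *v y)"
proof -
  have "x \<bullet> (M *v y) = (x v* M) \<bullet> y" by (simp add: dot_lmul_matrix)
  also have "x v* M = M *v x" by (metis assms vector_transpose_matrix)
  finally show ?thesis by simp
qed

lemma quadratic_nonpos_imp_linear_coeff_zero: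
  fixes a C :: real
  assumes "\<And>s. 2 * s * a + s^2 * C \<le> 0" "a \<ge> 0"
  shows "a = 0"
proof (rule ccontr)
  assume "a \<noteq> 0"
  hence a: "a > 0" using assms(2) by simp
  define s where "s = a / (2 * (\<bar>C\<bar> + 1))"
  have s: "s > 0" using a by (simp add: s_def)
  have "s * (2 * a + s * C) \<le> 0"
    using assms(1)[of s] by (simp add: power2_eq_square algebra_simps)
  hence "2 * a + s * C \<le> 0" using s by (simp add: mult_le_0_iff)
  moreover have "s * \<bar>C\<bar> \<le> a / 2"
  proof -
    have "s * \<bar>C\<bar> = (a / 2) * (\<bar>C\<bar> / (\<bar>C\<bar> + 1))" unfolding s_def by simp
    also have "\<dots> \<le> (a / 2) * 1" using a by (intro mult_left_mono) auto
    finally show ?thesis by simp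
  qed
  moreover have "s * (- \<bar>C\<bar>) \<le> s * C" using s by (intro mult_left_mono) auto
  ultimately show False using a by linarith
qed

lemma rayleigh_maximiser_eigenvector:
  fixes M :: "real^'k::finite^'k"
  assumes sym: "transpose M = M" and S: "subspace S" and inv: "\<And>z. z \<in> S \<Longrightarrow> M *v z \<in> S"
    and y: "y \<in> S" "y \<bullet> y = 1"
    and max: "\<And>z. z \<in> S \<Longrightarrow> z \<bullet> (M *v z) \<le> (y \<bullet> (M *v y)) * (z \<bullet> z)"
  shows "M *v y = (y \<bullet> (M *v y)) *\<^sub>R y"
proof -
  define lam where "lam = y \<bullet> (M *v y)"
  define w where "w = M *v y - lam *\<^sub>R y"
  have wS: "w \<in> S" unfolding w_def using S inv y(1) by (simp add: subspace_diff subspace_scale)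
  \<comment> \<open>Maximality along the line \<open>y + s w\<close> forces the first-order term \<open>2 s (w \<bullet> w)\<close> to vanish.\<close>
  have "w \<bullet> w = 0"
  proof (rule quadratic_nonpos_imp_linear_coeff_zero)
    fix s :: real
    have "y + s *\<^sub>R w \<in> S" using wS y(1) S by (simp add: subspace_add subspace_scale)
    hence "(y + s *\<^sub>R w) \<bullet> (M *v (y + s *\<^sub>R w)) \<le> lam * ((y + s *\<^sub>R w) \<bullet> (y + s *\<^sub>R w))"
      unfolding lam_def by (rule max)
    moreover have "w \<bullet> (M *v y) = (M *v w) \<bullet> y" using symmetric_matrix_inner[OF sym] by simp
    moreover have "w \<bullet> (M *v y) - lam * (w \<bullet> y) = w \<bullet> w" unfolding w_def
      by (simp add: inner_diff_right inner_diff_left algebra_simps inner_commute)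
    ultimately show "2 * s * (w \<bullet> w) + s^2 * ((w \<bullet> (M *v w)) - lam * (w \<bullet> w)) \<le> 0"
      using y(2) lam_def
      by (simp add: matrix_vector_right_distrib matrix_vector_mult_scaleR inner_add_left inner_add_right
          algebra_simps power2_eq_square inner_commute)
  qed simp
  thus ?thesis unfolding w_def lam_def by simp
qed

lemma symmetric_matrix_invariant_subspace_eigenvector:
  fixes M :: "real^'k::finite^'k"
  assumes sym: "transpose M = M" and S: "subspace S" "S \<noteq> {0}"
    and inv: "\<And>z. z \<in> S \<Longrightarrow> M *v z \<in> S"
  obtains y lam where "y \<in> S" "norm y = 1" "M *v y = lam *\<^sub>R y"
proof -
  define K where "K = S \<inter> sphere 0 1"
  obtain z where z: "z \<in> S" "z \<noteq> 0" using S subspace_0 by blast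
  have "compact K" unfolding K_def
    by (metis Int_commute closed_subspace compact_Int_closed compact_sphere S(1))
  moreover have "(1 / norm z) *\<^sub>R z \<in> K" unfolding K_def using z S(1)
    by (simp add: subspace_scale)
  hence "K \<noteq> {}" by blast
  moreover have "continuous_on K (\<lambda>y. y \<bullet> (M *v y))"
    by (intro continuous_intros linear_continuous_on matrix_vector_mul_bounded_linear)
  ultimately obtain y where y: "y \<in> K" "\<And>z. z \<in> K \<Longrightarrow> z \<bullet> (M *v z) \<le> y \<bullet> (M *v y)"
    using continuous_attains_sup by metis
  have yS: "y \<in> S" and yy: "y \<bullet> y = 1" and yn: "norm y = 1" using y(1) K_def by (auto simp: norm_eq_1)
  have "z \<bullet> (M *v z) \<le> (y \<bullet> (M *v y)) * (z \<bullet> z)" if "z \<in> S" for z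
  proof (cases "z = 0")
    case False
    have "(1 / norm z) *\<^sub>R z \<in> K" unfolding K_def using that False S(1)
      by (simp add: subspace_scale)
    hence "((1 / norm z) *\<^sub>R z) \<bullet> (M *v ((1 / norm z) *\<^sub>R z)) \<le> y \<bullet> (M *v y)"
      using y(2) by blast
    hence "(z \<bullet> (M *v z)) / (norm z)^2 \<le> y \<bullet> (M *v y)"
      by (simp add: matrix_vector_mult_scaleR power2_eq_square)
    thus ?thesis using False by (simp add: divide_le_eq power2_norm_eq_inner)
  qed simp
  then show thesis using rayleigh_maximiser_eigenvector[OF sym S(1) inv yS yy] that yS yn by blast
qed

lemma span_insert_orthogonal_complement:
  assumes S: "subspace S" and y: "y \<in> S" "y \<bullet> y = 1" and U: "span U = S \<inter> {z. y \<bullet> z = 0}"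
  shows "span (insert y U) = S"
proof
  have "U \<subseteq> S" using U span_superset by blast
  then show "span (insert y U) \<subseteq> S" using y(1) S by (simp add: span_minimal)
next
  show "S \<subseteq> span (insert y U)"
  proof
    fix z assume zS: "z \<in> S"
    have "z - (y \<bullet> z) *\<^sub>R y \<in> span U" unfolding U using zS y S
      by (simp add: subspace_diff subspace_scale inner_diff_right)
    hence "z - (y \<bullet> z) *\<^sub>R y \<in> span (insert y U)" by (metis span_mono subset_insertI subsetD)
    moreover have "(y \<bullet> z) *\<^sub>R y \<in> span (insert y U)" by (simp add: span_base span_scale)
    ultimately show "z \<in> span (insert y U)" by (metis diff_add_cancel span_add)
  qed
qed

lemma symmetric_matrix_invariant_subspace_eigenbasis:
  fixes M :: "real^'k::finite^'k"
  assumes sym: "transpose M = M"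
  shows "subspace S \<Longrightarrow> \<forall>z\<in>S. M *v z \<in> S \<Longrightarrow> \<exists>U lam. U \<subseteq> S \<and> finite U \<and> pairwise orthogonal U \<and>
     (\<forall>u\<in>U. norm u = 1) \<and> span U = S \<and> (\<forall>u\<in>U. M *v u = lam u *\<^sub>R u)"
proof (induction "dim S" arbitrary: S rule: less_induct)
  case less
  show ?case
  proof (cases "S = {0}")
    case True
    then show ?thesis by (intro exI[of _ "{}"]) auto
  next
    case False
    then obtain y lam where y: "y \<in> S" "norm y = 1" "M *v y = lam *\<^sub>R y"
      using symmetric_matrix_invariant_subspace_eigenvector[OF sym less.prems(1)] less.prems(2) by blast
    have yy: "y \<bullet> y = 1" using y(2) by (simp add: norm_eq_1)
    define S' where "S' = S \<inter> {z. y \<bullet> z = 0}"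
    have subS': "subspace S'" unfolding S'_def
      using less.prems(1) subspace_orthogonal_to_vector[of y]
      by (simp add: subspace_inter orthogonal_def)
    have invS': "\<forall>z\<in>S'. M *v z \<in> S'"
    proof
      fix z assume "z \<in> S'"
      hence "z \<in> S" "y \<bullet> z = 0" unfolding S'_def by auto
      moreover have "y \<bullet> (M *v z) = (M *v y) \<bullet> z" using symmetric_matrix_inner[OF sym] by simp
      ultimately show "M *v z \<in> S'" unfolding S'_def using less.prems(2) y(3) by simp
    qed
    have "S' \<subseteq> S" "y \<notin> S'" unfolding S'_def using yy by auto
    hence "dim S' < dim S" using y(1) less.prems(1)
      by (metis dim_psubset psubsetI subspace_span span_eq_iff subS')
    then obtain U lamU where U: "U \<subseteq> S'" "finite U" "pairwise orthogonal U"
      "\<forall>u\<in>U. norm u = 1" "span U = S'" "\<forall>u\<in>U. M *v u = lamU u *\<^sub>R u"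
      using less.hyps[OF _ subS' invS'] by blast
    have "y \<notin> U" using U(1) \<open>y \<notin> S'\<close> by auto
    have "pairwise orthogonal (insert y U)"
      using U(1,3) unfolding pairwise_insert S'_def by (auto simp: orthogonal_def inner_commute)
    moreover have "span (insert y U) = S"
      using span_insert_orthogonal_complement[OF less.prems(1) y(1) yy] U(5) unfolding S'_def by blast
    ultimately show ?thesis
      using U y \<open>S' \<subseteq> S\<close> \<open>y \<notin> U\<close>
      by (intro exI[of _ "insert y U"] exI[of _ "lamU(y := lam)"]) auto
  qed
qed

definition orthonormal_basis :: "(real^'k::finite) set \<Rightarrow> bool" where
  "orthonormal_basis U \<longleftrightarrow> finite U \<and> pairwise orthogonal U \<and> (\<forall>u\<in>U. norm u = 1) \<and> span U = UNIV"

definition eigenbasis :: "real^'k::finite^'k \<Rightarrow> (real^'k) set \<Rightarrow> (real^'k \<Rightarrow> real) \<Rightarrow> bool" where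
  "eigenbasis M U lam \<longleftrightarrow> orthonormal_basis U \<and> (\<forall>u\<in>U. M *v u = lam u *\<^sub>R u)"

lemma symmetric_matrix_eigenbasis:
  fixes M :: "real^'k::finite^'k"
  assumes "transpose M = M"
  obtains U lam where "eigenbasis M U lam"
  using symmetric_matrix_invariant_subspace_eigenbasis[OF assms, of UNIV]
  unfolding eigenbasis_def orthonormal_basis_def by auto

lemma orthonormal_basis_inner:
  "orthonormal_basis U \<Longrightarrow> u \<in> U \<Longrightarrow> u' \<in> U \<Longrightarrow> u \<bullet> u' = (if u = u' then 1 else 0)"
  unfolding orthonormal_basis_def pairwise_def orthogonal_def by (auto simp: norm_eq_1)

lemma orthonormal_basis_independent:
  assumes "orthonormal_basis U" "V \<subseteq> U"
  shows "independent V"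
proof (rule pairwise_orthogonal_independent)
  show "pairwise orthogonal V" using assms unfolding orthonormal_basis_def by (auto intro: pairwise_subset)
  show "0 \<notin> V" using assms unfolding orthonormal_basis_def by force
qed

lemma orthonormal_basis_coeff:
  assumes "orthonormal_basis U" "u' \<in> U"
  shows "u' \<bullet> (\<Sum>u\<in>U. c u *\<^sub>R u) = c u'"
proof -
  have "u' \<bullet> (\<Sum>u\<in>U. c u *\<^sub>R u) = (\<Sum>u\<in>U. c u * (u' \<bullet> u))"
    by (simp add: inner_sum_right)
  also have "\<dots> = (\<Sum>u\<in>U. if u = u' then c u else 0)"
    using orthonormal_basis_inner[OF assms(1) assms(2)] by (intro sum.cong) auto
  also have "\<dots> = c u'" using assms unfolding orthonormal_basis_def by (simp add: sum.delta')
  finally show ?thesis .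
qed

lemma orthonormal_basis_expansion:
  assumes "orthonormal_basis U"
  shows "v = (\<Sum>u\<in>U. (u \<bullet> v) *\<^sub>R u)"
  using orthonormal_basis_expand[of U v] assms
  unfolding orthonormal_basis_def by (simp add: inner_commute)

lemma orthonormal_basis_inner_sums:
  assumes "orthonormal_basis U"
  shows "(\<Sum>u\<in>U. c u *\<^sub>R u) \<bullet> (\<Sum>u\<in>U. d u *\<^sub>R u) = (\<Sum>u\<in>U. c u * d u)"
  using orthonormal_basis_coeff[OF assms] by (simp add: inner_sum_left)

lemma orthonormal_basis_inner_self:
  assumes "orthonormal_basis U"
  shows "v \<bullet> v = (\<Sum>u\<in>U. (u \<bullet> v)^2)"
  using orthonormal_basis_inner_sums[OF assms, of "\<lambda>u. u \<bullet> v" "\<lambda>u. u \<bullet> v"]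
    orthonormal_basis_expansion[OF assms, of v] by (simp add: power2_eq_square)

lemma orthonormal_projection_residual_orthogonal:
  assumes B: "finite B" "pairwise orthogonal B" "\<forall>b\<in>B. norm b = 1" and v: "v \<in> span B"
  shows "v \<bullet> (x - (\<Sum>b\<in>B. (b \<bullet> x) *\<^sub>R b)) = 0"
proof -
  have residual: "orthogonal (x - (\<Sum>b\<in>B. (b \<bullet> x) *\<^sub>R b)) b'" if b': "b' \<in> B" for b'
  proof -
    have "b' \<bullet> (\<Sum>b\<in>B. (b \<bullet> x) *\<^sub>R b) = (\<Sum>b\<in>B. (b \<bullet> x) * (b' \<bullet> b))"
      by (simp add: inner_sum_right)
    also have "\<dots> = (\<Sum>b\<in>B. if b = b' then b \<bullet> x else 0)"
      using B b' unfolding pairwise_def orthogonal_def by (intro sum.cong) (auto simp: norm_eq_1)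
    also have "\<dots> = b' \<bullet> x" using B b' by (simp add: sum.delta')
    finally have "orthogonal b' (x - (\<Sum>b\<in>B. (b \<bullet> x) *\<^sub>R b))"
      unfolding orthogonal_def by (simp add: inner_diff_right)
    thus ?thesis by (simp add: orthogonal_commute)
  qed
  have "orthogonal (x - (\<Sum>b\<in>B. (b \<bullet> x) *\<^sub>R b)) v" using v residual by (rule orthogonal_to_span)
  thus ?thesis by (simp add: orthogonal_commute orthogonal_def)
qed

lemma eigenbasis_mult:
  assumes "eigenbasis M U lam"
  shows "M *v v = (\<Sum>u\<in>U. (lam u * (u \<bullet> v)) *\<^sub>R u)"
proof -
  have "M *v v = M *v (\<Sum>u\<in>U. (u \<bullet> v) *\<^sub>R u)"
    using orthonormal_basis_expansion assms eigenbasis_def by metis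
  also have "\<dots> = (\<Sum>u\<in>U. (lam u * (u \<bullet> v)) *\<^sub>R u)"
    using assms unfolding eigenbasis_def
    by (simp add: matrix_vector_mult_sum_right matrix_vector_mult_scaleR mult.commute)
  finally show ?thesis .
qed

lemma eigenbasis_quadratic_form:
  assumes "eigenbasis M U lam"
  shows "v \<bullet> (M *v v) = (\<Sum>u\<in>U. lam u * (u \<bullet> v)^2)"
proof -
  have U: "orthonormal_basis U" using assms eigenbasis_def by blast
  have "v \<bullet> (M *v v) = (\<Sum>u\<in>U. (u \<bullet> v) *\<^sub>R u) \<bullet> (\<Sum>u\<in>U. (lam u * (u \<bullet> v)) *\<^sub>R u)"
    by (metis eigenbasis_mult[OF assms] orthonormal_basis_expansion[OF U])
  also have "\<dots> = (\<Sum>u\<in>U. lam u * (u \<bullet> v)^2)"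
    by (simp add: orthonormal_basis_inner_sums[OF U] power2_eq_square mult_ac)
  finally show ?thesis .
qed

lemma eigenbasis_eigenvalue:
  assumes "eigenbasis M U lam" "u \<in> U"
  shows "lam u = u \<bullet> (M *v u)"
  using assms orthonormal_basis_inner[of U u u] unfolding eigenbasis_def by simp

lemma eigenbasis_psd_nonneg:
  assumes "eigenbasis M U lam" "\<And>v. 0 \<le> v \<bullet> (M *v v)" "u \<in> U"
  shows "lam u \<ge> 0"
  using assms eigenbasis_eigenvalue by metis

lemma psd_quadratic_form_zero_imp_null:
  fixes L :: "real^'k::finite^'k"
  assumes sym: "transpose L = L" and psd: "\<And>v. 0 \<le> v \<bullet> (L *v v)" and zero: "v \<bullet> (L *v v) = 0"
  shows "L *v v = 0"
proof -
  obtain U lam where E: "eigenbasis L U lam" using symmetric_matrix_eigenbasis[OF sym] .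
  have "finite U" using E unfolding eigenbasis_def orthonormal_basis_def by blast
  moreover have "lam u * (u \<bullet> v)^2 \<ge> 0" if "u \<in> U" for u
    using eigenbasis_psd_nonneg[OF E psd that] by simp
  ultimately have "\<forall>u\<in>U. lam u * (u \<bullet> v)^2 = 0"
    using zero eigenbasis_quadratic_form[OF E, of v] by (simp add: sum_nonneg_eq_0_iff)
  hence "\<forall>u\<in>U. lam u * (u \<bullet> v) = 0" by (auto simp: power2_eq_square)
  thus ?thesis unfolding eigenbasis_mult[OF E, of v] by (simp add: sum.neutral)
qed

section \<open>The matrix exponential of a symmetric matrix\<close>

definition outer_prod :: "real^'k::finite \<Rightarrow> real^'k \<Rightarrow> real^'k^'k" where
  "outer_prod u w = (\<chi> i j. u$i * w$j)"

lemma outer_prod_mult: "outer_prod u w *v v = (w \<bullet> v) *\<^sub>R u"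
  by (simp add: outer_prod_def matrix_vector_mult_def vec_eq_iff inner_vec_def sum_distrib_left algebra_simps)

lemma matpow_eigenbasis:
  assumes "eigenbasis M U lam"
  shows "matpow M j = (\<Sum>u\<in>U. (lam u ^ j) *\<^sub>R outer_prod u u)"
proof -
  have "matpow M j *v v = (\<Sum>u\<in>U. (lam u ^ j * (u \<bullet> v)) *\<^sub>R u)" for v
  proof (induction j)
    case 0
    then show ?case using orthonormal_basis_expansion[of U v] assms
      by (simp add: matpow_def eigenbasis_def)
  next
    case (Suc j)
    have "matpow M (Suc j) *v v = M *v (matpow M j *v v)"
      by (simp add: matpow_def matrix_vector_mul_assoc)
    also have "\<dots> = (\<Sum>u\<in>U. (lam u ^ Suc j * (u \<bullet> v)) *\<^sub>R u)"
      using assms unfolding Suc eigenbasis_def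
      by (simp add: matrix_vector_mult_sum_right matrix_vector_mult_scaleR mult_ac)
    finally show ?case .
  qed
  then show ?thesis
    by (simp add: matrix_eq matrix_vector_mult_sum_left scaleR_matrix_vector_mult outer_prod_mult)
qed

lemma mexp_eigenbasis:
  assumes "eigenbasis M U lam"
  shows "mexp M = (\<Sum>u\<in>U. exp (lam u) *\<^sub>R outer_prod u u)"
proof -
  have "(\<lambda>j. (1 / fact j :: real) *\<^sub>R matpow M j)
      = (\<lambda>j. \<Sum>u\<in>U. (lam u ^ j /\<^sub>R fact j) *\<^sub>R outer_prod u u)"
    by (simp add: matpow_eigenbasis[OF assms] scaleR_sum_right divide_inverse_commute)
  moreover have "(\<lambda>j. \<Sum>u\<in>U. (lam u ^ j /\<^sub>R fact j) *\<^sub>R outer_prod u u)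
      sums (\<Sum>u\<in>U. exp (lam u) *\<^sub>R outer_prod u u)"
    by (intro sums_sum sums_scaleR_left exp_converges)
  ultimately show ?thesis unfolding mexp_def by (simp add: sums_iff)
qed

lemma mexp_scaled_eigenbasis_mult:
  assumes "eigenbasis L U lam"
  shows "mexp (c *\<^sub>R L) *v v = (\<Sum>u\<in>U. (exp (c * lam u) * (u \<bullet> v)) *\<^sub>R u)"
proof -
  have "eigenbasis (c *\<^sub>R L) U (\<lambda>u. c * lam u)"
    using assms unfolding eigenbasis_def by (simp add: scaleR_matrix_vector_mult)
  then show ?thesis
    by (simp add: mexp_eigenbasis matrix_vector_mult_sum_left scaleR_matrix_vector_mult outer_prod_mult)
qed

lemma mexp_symmetric_inner:
  fixes L :: "real^'k::finite^'k"
  assumes "transpose L = L"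
  shows "w \<bullet> (mexp (c *\<^sub>R L) *v v) = (mexp (c *\<^sub>R L) *v w) \<bullet> v"
proof -
  obtain U lam where E: "eigenbasis L U lam" using symmetric_matrix_eigenbasis[OF assms] .
  show ?thesis unfolding mexp_scaled_eigenbasis_mult[OF E]
    by (simp add: inner_sum_right inner_sum_left inner_commute mult_ac)
qed

lemma mexp_fixes_null_space:
  fixes L :: "real^'k::finite^'k"
  assumes sym: "transpose L = L" and null: "L *v v = 0"
  shows "mexp (c *\<^sub>R L) *v v = v"
proof -
  obtain U lam where E: "eigenbasis L U lam" using symmetric_matrix_eigenbasis[OF sym] .
  have U: "orthonormal_basis U" using E eigenbasis_def by blast
  have "lam u * (u \<bullet> v) = 0" if "u \<in> U" for u
  proof -
    have "lam u * (u \<bullet> v) = (L *v u) \<bullet> v" using E that unfolding eigenbasis_def by simp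
    also have "\<dots> = 0" using symmetric_matrix_inner[OF sym] null by simp
    finally show ?thesis .
  qed
  hence "exp (c * lam u) * (u \<bullet> v) = u \<bullet> v" if "u \<in> U" for u
    using that by (cases "lam u = 0") auto
  hence "mexp (c *\<^sub>R L) *v v = (\<Sum>u\<in>U. (u \<bullet> v) *\<^sub>R u)"
    unfolding mexp_scaled_eigenbasis_mult[OF E] by (intro sum.cong) auto
  also have "\<dots> = v" using orthonormal_basis_expansion[OF U] by metis
  finally show ?thesis .
qed

lemma mexp_psd_norm_le:
  fixes L :: "real^'k::finite^'k"
  assumes sym: "transpose L = L" and psd: "\<And>v. 0 \<le> v \<bullet> (L *v v)" and s: "s \<ge> 0"
  shows "norm (mexp (- (s *\<^sub>R L)) *v v) \<le> norm v"
proof -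
  obtain U lam where E: "eigenbasis L U lam" using symmetric_matrix_eigenbasis[OF sym] .
  have U: "orthonormal_basis U" using E eigenbasis_def by blast
  have decay: "exp (- s * lam u) * (u \<bullet> v) * (exp (- s * lam u) * (u \<bullet> v)) \<le> (u \<bullet> v)^2"
    if "u \<in> U" for u
  proof -
    have "exp (- s * lam u) \<le> 1" using s eigenbasis_psd_nonneg[OF E psd that] by simp
    hence "(exp (- s * lam u))^2 \<le> 1" by (simp add: power_le_one)
    hence "(exp (- s * lam u))^2 * (u \<bullet> v)^2 \<le> 1 * (u \<bullet> v)^2" by (intro mult_right_mono) auto
    thus ?thesis by (simp add: power2_eq_square mult_ac)
  qed
  have "(norm (mexp (- (s *\<^sub>R L)) *v v))^2
      = (\<Sum>u\<in>U. exp (- s * lam u) * (u \<bullet> v) * (exp (- s * lam u) * (u \<bullet> v)))"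
    using mexp_scaled_eigenbasis_mult[OF E, of "- s" v]
    by (simp add: power2_norm_eq_inner orthonormal_basis_inner_sums[OF U])
  also have "\<dots> \<le> (norm v)^2"
    using decay by (simp add: power2_norm_eq_inner orthonormal_basis_inner_self[OF U] sum_mono)
  finally show ?thesis by (simp add: power_mono_iff)
qed

section \<open>Linear ODEs with right derivatives\<close>

lemma right_derivative_zero_imp_le:
  fixes h :: "real \<Rightarrow> real"
  assumes ab: "a \<le> b" and cont: "continuous_on {a..b} h"
    and der: "\<And>t. a \<le> t \<Longrightarrow> t < b \<Longrightarrow> (h has_real_derivative 0) (at t within {t..})"
  shows "h b \<le> h a"
proof (rule ccontr)
  assume "\<not> h b \<le> h a"
  hence hb: "h b > h a" by simp
  hence ab': "a < b" using ab by (cases "a = b") auto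
  \<comment> \<open>\<open>k\<close> has right derivative \<open>-e < 0\<close>, so it drops below \<open>0\<close> just right of the
      largest \<open>c \<le> b\<close> with \<open>k c \<le> 0\<close>; but \<open>k b > 0\<close>.\<close>
  define e where "e = (h b - h a) / (2 * (b - a))"
  have e: "e > 0" unfolding e_def using hb ab' by simp
  define k where "k t = h t - h a - e * (t - a)" for t
  define Z where "Z = {t \<in> {a..b}. k t \<le> 0}"
  have contk: "continuous_on {a..b} k" unfolding k_def by (intro continuous_intros cont)
  have clZ: "closed Z" unfolding Z_def
    using continuous_on_closed_Collect_le[OF contk continuous_on_const[of _ 0]] by simp
  have aZ: "a \<in> Z" unfolding Z_def k_def using ab by simp
  have bdd: "bdd_above Z" unfolding Z_def by (auto intro: bdd_aboveI[of _ b])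
  define c where "c = Sup Z"
  have cZ: "c \<in> Z" unfolding c_def using aZ by (intro closed_contains_Sup bdd clZ) auto
  have "e * (b - a) = (h b - h a) / 2" unfolding e_def using ab' by (simp add: field_simps)
  hence kb: "k b > 0" unfolding k_def using hb by simp
  have "c \<le> b" "k c \<le> 0" "a \<le> c" using cZ unfolding Z_def by auto
  hence cb: "c < b" using kb by (cases "c = b") auto
  have dh: "(h has_real_derivative 0) (at c within {c..})" using der \<open>a \<le> c\<close> cb by auto
  have "(k has_real_derivative (0 - 0 - e * (1 - 0))) (at c within {c..})" unfolding k_def
    by (rule DERIV_diff[OF DERIV_diff[OF dh DERIV_const] DERIV_cmult[OF DERIV_diff[OF DERIV_ident DERIV_const]]])
  then obtain d where d: "d > 0" "\<And>hh. hh > 0 \<Longrightarrow> c + hh \<in> {c..} \<Longrightarrow> hh < d \<Longrightarrow> k c > k (c + hh)"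
    using has_real_derivative_neg_dec_right[of k "0 - 0 - e * (1 - 0)" c "{c..}"] e by auto
  define hh where "hh = min (d / 2) (b - c)"
  have hh: "hh > 0" "hh < d" "c + hh \<le> b" unfolding hh_def using d cb by auto
  have "k (c + hh) < k c" using d(2)[of hh] hh by auto
  hence "c + hh \<in> Z" unfolding Z_def using hh \<open>k c \<le> 0\<close> \<open>a \<le> c\<close> by auto
  hence "c + hh \<le> c" unfolding c_def using bdd by (rule cSup_upper)
  thus False using hh by simp
qed

lemma right_derivative_zero_imp_const:
  fixes h :: "real \<Rightarrow> real"
  assumes cont: "continuous_on {a..b} h"
    and der: "\<And>t. a \<le> t \<Longrightarrow> t < b \<Longrightarrow> (h has_real_derivative 0) (at t within {t..})"
    and t: "a \<le> t" "t \<le> b"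
  shows "h t = h a"
proof -
  have cont': "continuous_on {a..t} h" using t by (intro continuous_on_subset[OF cont]) auto
  have "h t \<le> h a" by (rule right_derivative_zero_imp_le[OF t(1) cont']) (use der t in auto)
  moreover have "- h t \<le> - h a"
  proof (rule right_derivative_zero_imp_le[of a t "\<lambda>s. - h s", OF t(1)])
    show "continuous_on {a..t} (\<lambda>s. - h s)" using cont' by (rule continuous_on_minus)
    fix s assume "a \<le> s" "s < t"
    with der t DERIV_minus show "((\<lambda>s. - h s) has_real_derivative 0) (at s within {s..})"
      by fastforce
  qed
  ultimately show ?thesis by simp
qed

lemma scalar_linear_ode_solution:
  fixes c :: "real \<Rightarrow> real"
  assumes cont: "continuous_on {a..b} c"
    and der: "\<And>t. a \<le> t \<Longrightarrow> t < b \<Longrightarrow> (c has_real_derivative (- lam * c t)) (at t within {t..})"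
    and t: "a \<le> t" "t \<le> b"
  shows "c t = exp (- lam * (t - a)) * c a"
proof -
  define g where "g t = exp (lam * (t - a)) * c t" for t
  have "g t = g a"
  proof (rule right_derivative_zero_imp_const[OF _ _ t])
    show "continuous_on {a..b} g" unfolding g_def by (intro continuous_intros cont)
  next
    fix s assume s: "a \<le> s" "s < b"
    have "((\<lambda>t. exp (lam * (t - a))) has_real_derivative exp (lam * (s - a)) * lam) (at s within {s..})"
      by (auto intro!: derivative_eq_intros)
    from DERIV_mult[OF this der[OF s]]
    show "(g has_real_derivative 0) (at s within {s..})" unfolding g_def by (simp add: algebra_simps)
  qed
  hence "exp (- (lam * (t - a))) * (exp (lam * (t - a)) * c t) = exp (- (lam * (t - a))) * c a"
    unfolding g_def by simp
  thus ?thesis by (simp add: mult.assoc[symmetric] exp_add[symmetric])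
qed

lemma linear_ode_solution:
  fixes L :: "real^'k::finite^'k" and x :: "real \<Rightarrow> real^'k"
  assumes sym: "transpose L = L"
    and cont: "continuous_on {a..b} x"
    and der: "\<And>t. a \<le> t \<Longrightarrow> t < b \<Longrightarrow> (x has_vector_derivative (- (L *v x t))) (at t within {t..})"
    and t: "a \<le> t" "t \<le> b"
  shows "x t = mexp (- ((t - a) *\<^sub>R L)) *v x a"
proof -
  obtain U lam where E: "eigenbasis L U lam" using symmetric_matrix_eigenbasis[OF sym] .
  have U: "orthonormal_basis U" using E eigenbasis_def by blast
  have coord: "u \<bullet> x t = exp (- lam u * (t - a)) * (u \<bullet> x a)" if u: "u \<in> U" for u
  proof (rule scalar_linear_ode_solution[of a b "\<lambda>s. u \<bullet> x s" "lam u", OF _ _ t])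
    show "continuous_on {a..b} (\<lambda>s. u \<bullet> x s)" by (intro continuous_intros cont)
  next
    fix s assume s: "a \<le> s" "s < b"
    have "((\<lambda>s. u \<bullet> x s) has_vector_derivative u \<bullet> (- (L *v x s))) (at s within {s..})"
      by (rule bounded_linear.has_vector_derivative[OF bounded_linear_inner_right der[OF s]])
    moreover have "u \<bullet> (- (L *v x s)) = - lam u * (u \<bullet> x s)"
      using symmetric_matrix_inner[OF sym, of u "x s"] E u unfolding eigenbasis_def by simp
    ultimately show "((\<lambda>s. u \<bullet> x s) has_real_derivative - lam u * (u \<bullet> x s)) (at s within {s..})"
      by (simp add: has_real_derivative_iff_has_vector_derivative)
  qed
  have "x t = (\<Sum>u\<in>U. (u \<bullet> x t) *\<^sub>R u)" by (rule orthonormal_basis_expansion[OF U])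
  also have "\<dots> = (\<Sum>u\<in>U. (exp (- lam u * (t - a)) * (u \<bullet> x a)) *\<^sub>R u)"
    using coord by (intro sum.cong) auto
  also have "\<dots> = mexp (- ((t - a) *\<^sub>R L)) *v x a"
    using mexp_scaled_eigenbasis_mult[OF E, of "- (t - a)" "x a"]
    unfolding scaleR_minus_left by (simp add: mult.commute right_diff_distrib)
  finally show ?thesis .
qed

section \<open>Matrix-weighted Laplacians\<close>

lemma sum_UNIV_prod:
  "(\<Sum>p\<in>(UNIV::('n::finite \<times> 'd::finite) set). f p) = (\<Sum>i\<in>UNIV. \<Sum>a\<in>UNIV. f (i, a))"
  by (subst UNIV_Times_UNIV[symmetric]) (simp add: sum.cartesian_product)

lemma inner_blocks: "v \<bullet> w = (\<Sum>i\<in>UNIV. block v i \<bullet> block w i)"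
  by (simp add: inner_vec_def block_def sum_UNIV_prod)

lemma block_lap_mult:
  "block (lap W *v v) i = (\<Sum>j\<in>UNIV. mabs (W i j)) *v block v i - (\<Sum>j\<in>UNIV. W i j *v block v j)"
proof -
  have entry: "block (lap W *v v) i $ a
      = (\<Sum>j\<in>UNIV. \<Sum>b\<in>UNIV. (if i = j then (\<Sum>j\<in>UNIV. mabs (W i j)) $ a $ b * v $ (j, b) else 0))
        - (\<Sum>j\<in>UNIV. \<Sum>b\<in>UNIV. W i j $ a $ b * v $ (j, b))" for a
    by (simp add: block_def matrix_vector_mult_def lap_def sum_UNIV_prod left_diff_distrib
        sum_subtractf[symmetric] if_distrib[of "\<lambda>z. z * _"] cong: if_cong)
  have diagonal: "(\<Sum>j\<in>UNIV. \<Sum>b\<in>UNIV. (if i = j then D $ a $ b * v $ (j, b) else 0))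
      = (\<Sum>b\<in>UNIV. D $ a $ b * v $ (i, b))" for D a
    by (simp add: sum.swap[of _ UNIV UNIV] sum.delta)
  show ?thesis
    unfolding vec_eq_iff
  proof
    fix a
    show "block (lap W *v v) i $ a
        = ((\<Sum>j\<in>UNIV. mabs (W i j)) *v block v i - (\<Sum>j\<in>UNIV. W i j *v block v j)) $ a"
      unfolding entry diagonal by (simp add: block_def matrix_vector_mult_def sum_component)
  qed
qed

lemma lap_symmetric:
  assumes sym: "\<And>i j. transpose (W i j) = W i j" and swap: "\<And>i j. W i j = W j i"
  shows "transpose (lap W) = lap W"
proof -
  have W_entry: "W j i $ b $ a = W i j $ a $ b" for i j a b
    using arg_cong[OF sym[of i j], of "\<lambda>M. M $ a $ b"] swap[of i j] by (simp add: transpose_def)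
  have mabs_entry: "mabs (W i j) $ b $ a = mabs (W i j) $ a $ b" for i j a b
    using arg_cong[OF sym[of i j], of "\<lambda>M. M $ a $ b"] by (simp add: mabs_def transpose_def)
  have "lap W $ (j, b) $ (i, a) = lap W $ (i, a) $ (j, b)" for i a j b
  proof (cases "i = j")
    case True
    then show ?thesis by (simp add: lap_def W_entry sum_component mabs_entry)
  next
    case False
    then show ?thesis by (simp add: lap_def W_entry)
  qed
  then show ?thesis by (simp add: vec_eq_iff transpose_def)
qed

lemma lap_quadratic_form_nonneg:
  assumes sym: "\<And>i j. transpose (W i j) = W i j" and swap: "\<And>i j. W i j = W j i"
    and sign: "\<And>i j. psd (W i j) \<or> nsd (W i j)"
  shows "0 \<le> v \<bullet> (lap W *v v)"
proof -
  define x where "x = block v"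
  \<comment> \<open>Twice the quadratic form is the sum over all pairs of
      \<open>(x\<^sub>i - sgn(A\<^sub>i\<^sub>j) x\<^sub>j)\<^sup>T |A\<^sub>i\<^sub>j| (x\<^sub>i - sgn(A\<^sub>i\<^sub>j) x\<^sub>j)\<close>.\<close>
  define T where "T i j = x i \<bullet> (mabs (W i j) *v x i) + x j \<bullet> (mabs (W i j) *v x j)
    - 2 * (x i \<bullet> (W i j *v x j))" for i j
  have T_nonneg: "T i j \<ge> 0" for i j
  proof -
    have cross: "x j \<bullet> (W i j *v x i) = x i \<bullet> (W i j *v x j)"
      using symmetric_matrix_inner[OF sym[of i j], of "x j" "x i"] by (simp add: inner_commute)
    show ?thesis
    proof (cases "psd (W i j)")
      case True
      have "0 \<le> (x i - x j) \<bullet> (W i j *v (x i - x j))" using True unfolding psd_def by blast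
      then show ?thesis using True cross
        by (simp add: T_def mabs_def matrix_vector_mult_diff_distrib inner_diff_left inner_diff_right)
    next
      case False
      hence "(x i + x j) \<bullet> (W i j *v (x i + x j)) \<le> 0" using sign unfolding nsd_def by blast
      then show ?thesis using False cross
        by (simp add: T_def mabs_def uminus_matrix_vector_mult matrix_vector_right_distrib
            inner_add_left inner_add_right)
    qed
  qed
  have expand: "v \<bullet> (lap W *v v)
      = (\<Sum>i\<in>UNIV. \<Sum>j\<in>UNIV. x i \<bullet> (mabs (W i j) *v x i) - x i \<bullet> (W i j *v x j))"
    by (simp add: inner_blocks block_lap_mult x_def matrix_vector_mult_sum_left inner_diff_right
        inner_sum_right sum_subtractf)
  have swap_sum: "(\<Sum>i\<in>UNIV. \<Sum>j\<in>UNIV. x j \<bullet> (mabs (W i j) *v x j))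
      = (\<Sum>i\<in>UNIV. \<Sum>j\<in>UNIV. x i \<bullet> (mabs (W i j) *v x i))"
    by (subst sum.swap) (simp add: swap[of _ "_::'a"])
  have "2 * (v \<bullet> (lap W *v v)) = (\<Sum>i\<in>UNIV. \<Sum>j\<in>UNIV. T i j)"
    unfolding expand T_def using swap_sum by (simp add: sum_subtractf sum.distrib sum_distrib_left)
  also have "\<dots> \<ge> 0" using T_nonneg by (intro sum_nonneg) auto
  finally show ?thesis by simp
qed

section \<open>Eigenvalues above a threshold\<close>

lemma sorted_concat_map_replicate:
  "sorted xs \<Longrightarrow> sorted (concat (map (\<lambda>e. replicate (f e) e) xs))"
  by (induction xs) (auto simp: sorted_append)

lemma length_filter_concat_map_replicate:
  "length (filter p (concat (map (\<lambda>e. replicate (f e) e) xs)))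
     = sum_list (map (\<lambda>e. if p e then f e else 0) xs)"
  by (induction xs) auto

lemma sorted_rev_nth_gt:
  fixes ys :: "'a::linorder list"
  assumes sorted: "sorted (rev ys)" and many: "length (filter (\<lambda>y. q < y) ys) > m"
  shows "q < ys ! m"
proof (rule ccontr)
  assume le: "\<not> q < ys ! m"
  have "i < m" if i: "i < length ys" "q < ys ! i" for i
  proof (rule ccontr)
    assume "\<not> i < m"
    hence "ys ! i \<le> ys ! m" using sorted_rev_nth_mono[OF sorted, of m i] i(1) by simp
    thus False using le i(2) by simp
  qed
  hence "{i. i < length ys \<and> q < ys ! i} \<subseteq> {..<m}" by auto
  hence "card {i. i < length ys \<and> q < ys ! i} \<le> m"
    by (metis card_lessThan card_mono finite_lessThan)
  thus False using many by (simp add: length_filter_conv_card)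
qed

lemma eigvals_subset_eigenbasis:
  assumes E: "eigenbasis P U lam"
  shows "eigvals P \<subseteq> lam ` U"
proof
  fix e assume "e \<in> eigvals P"
  then obtain v where v: "v \<noteq> 0" "P *v v = e *\<^sub>R v" unfolding eigvals_def by blast
  have U: "orthonormal_basis U" using E eigenbasis_def by blast
  have "\<exists>u\<in>U. u \<bullet> v \<noteq> 0"
  proof (rule ccontr)
    assume "\<not> (\<exists>u\<in>U. u \<bullet> v \<noteq> 0)"
    hence "(\<Sum>u\<in>U. (u \<bullet> v) *\<^sub>R u) = 0" by simp
    thus False using orthonormal_basis_expansion[OF U, of v] v(1) by simp
  qed
  then obtain u where u: "u \<in> U" "u \<bullet> v \<noteq> 0" by blast
  have "lam u * (u \<bullet> v) = u \<bullet> (P *v v)"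
    using orthonormal_basis_coeff[OF U u(1), of "\<lambda>u. lam u * (u \<bullet> v)"] eigenbasis_mult[OF E, of v] by simp
  also have "\<dots> = e * (u \<bullet> v)" using v by simp
  finally show "e \<in> lam ` U" using u by auto
qed

lemma length_filter_gt_eig_desc:
  assumes "finite (eigvals P)"
  shows "length (filter (\<lambda>y. q < y) (eig_desc P)) = (\<Sum>e\<in>{e\<in>eigvals P. q < e}. eig_mult P e)"
proof -
  have "length (filter (\<lambda>y. q < y) (eig_desc P))
      = sum_list (map (\<lambda>e. if q < e then eig_mult P e else 0) (sorted_list_of_set (eigvals P)))"
    unfolding eig_desc_def by (simp add: rev_filter[symmetric] length_filter_concat_map_replicate)
  also have "\<dots> = (\<Sum>e\<in>eigvals P. if q < e then eig_mult P e else 0)"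
    using assms by (simp add: sum_list_distinct_conv_sum_set)
  also have "\<dots> = (\<Sum>e\<in>{e\<in>eigvals P. q < e}. eig_mult P e)"
    using assms by (simp add: sum.inter_filter)
  finally show ?thesis .
qed

lemma eigenbasis_card_gt_le_length_filter_eig_desc:
  assumes E: "eigenbasis P U lam"
  shows "card {u\<in>U. q < lam u} \<le> length (filter (\<lambda>y. q < y) (eig_desc P))"
proof -
  define G where "G = {u\<in>U. q < lam u}"
  have U: "orthonormal_basis U" using E eigenbasis_def by blast
  have finU: "finite U" using U orthonormal_basis_def by blast
  have fin: "finite (eigvals P)"
    using eigvals_subset_eigenbasis[OF E] finU by (meson finite_imageI finite_subset)
  have "card G = (\<Sum>e\<in>lam ` G. card {u\<in>G. lam u = e})"
    using finU sum.image_gen[of G "\<lambda>_. 1::nat" lam] by (simp add: G_def)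
  also have "\<dots> \<le> (\<Sum>e\<in>lam ` G. eig_mult P e)"
  proof (rule sum_mono)
    fix e assume "e \<in> lam ` G"
    have "{u\<in>G. lam u = e} \<subseteq> {v. P *v v = e *\<^sub>R v}" using E unfolding eigenbasis_def G_def by auto
    moreover have "independent {u\<in>G. lam u = e}"
      using orthonormal_basis_independent[OF U] unfolding G_def by auto
    ultimately show "card {u\<in>G. lam u = e} \<le> eig_mult P e"
      unfolding eig_mult_def by (rule independent_card_le_dim)
  qed
  also have "\<dots> \<le> (\<Sum>e\<in>{e\<in>eigvals P. q < e}. eig_mult P e)"
  proof (rule sum_mono2)
    show "lam ` G \<subseteq> {e\<in>eigvals P. q < e}"
    proof
      fix e assume "e \<in> lam ` G"
      then obtain u where u: "u \<in> U" "q < lam u" "e = lam u" by (auto simp: G_def)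
      have "u \<noteq> 0" using U u(1) unfolding orthonormal_basis_def by auto
      moreover have "P *v u = lam u *\<^sub>R u" using E u(1) by (simp add: eigenbasis_def)
      ultimately show "e \<in> {e\<in>eigvals P. q < e}" using u unfolding eigvals_def by auto
    qed
  qed (use fin in auto)
  also have "\<dots> = length (filter (\<lambda>y. q < y) (eig_desc P))"
    using length_filter_gt_eig_desc[OF fin, of q] by simp
  finally show ?thesis unfolding G_def .
qed

lemma eigenbasis_card_gt_mu_le:
  assumes E: "eigenbasis P U lam" and mu: "mu (m + 1) P \<le> q"
  shows "card {u\<in>U. q < lam u} \<le> m"
proof (rule ccontr)
  assume "\<not> card {u\<in>U. q < lam u} \<le> m"
  hence "m < length (filter (\<lambda>y. q < y) (eig_desc P))"
    using eigenbasis_card_gt_le_length_filter_eig_desc[OF E, of q] by simp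
  moreover have "sorted (rev (eig_desc P))"
    unfolding eig_desc_def by (simp add: sorted_concat_map_replicate)
  ultimately have "q < eig_desc P ! m" by (intro sorted_rev_nth_gt)
  thus False using mu unfolding mu_def by simp
qed

lemma fixed_subspace_subset_span_eigenvectors:
  fixes P :: "real^'k::finite^'k"
  assumes sym: "transpose P = P" and E: "eigenbasis P U lam"
    and fixed: "\<And>v. v \<in> N \<Longrightarrow> P *v v = v" and q1: "q < 1"
  shows "N \<subseteq> span {u\<in>U. q < lam u}"
proof
  fix v assume v: "v \<in> N"
  have U: "orthonormal_basis U" using E eigenbasis_def by blast
  have orth: "u \<bullet> v = 0" if u: "u \<in> U" "\<not> q < lam u" for u
  proof -
    have "lam u * (u \<bullet> v) = (P *v u) \<bullet> v" using E u unfolding eigenbasis_def by simp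
    also have "\<dots> = u \<bullet> v" using symmetric_matrix_inner[OF sym, of u v] fixed[OF v] by simp
    finally have "(lam u - 1) * (u \<bullet> v) = 0" by (simp add: algebra_simps)
    thus ?thesis using u q1 by simp
  qed
  have "v = (\<Sum>u\<in>U. (u \<bullet> v) *\<^sub>R u)" by (rule orthonormal_basis_expansion[OF U])
  also have "\<dots> = (\<Sum>u\<in>{u\<in>U. q < lam u}. (u \<bullet> v) *\<^sub>R u)"
    using orth U unfolding orthonormal_basis_def by (intro sum.mono_neutral_right) auto
  also have "\<dots> \<in> span {u\<in>U. q < lam u}" by (intro span_sum span_scale span_base)
  finally show "v \<in> span {u\<in>U. q < lam u}" .
qed

lemma quadratic_form_le_on_orthogonal_complement:
  fixes P :: "real^'k::finite^'k"
  assumes sym: "transpose P = P" and N: "subspace N"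
    and fixed: "\<And>v. v \<in> N \<Longrightarrow> P *v v = v"
    and mu: "mu (dim N + 1) P \<le> q" and q1: "q < 1"
    and y: "\<And>v. v \<in> N \<Longrightarrow> v \<bullet> y = 0"
  shows "y \<bullet> (P *v y) \<le> q * (y \<bullet> y)"
proof -
  obtain U lam where E: "eigenbasis P U lam" using symmetric_matrix_eigenbasis[OF sym] .
  have U: "orthonormal_basis U" using E eigenbasis_def by blast
  define G where "G = {u\<in>U. q < lam u}"
  have indep: "independent G" using orthonormal_basis_independent[OF U] unfolding G_def by auto
  have "N = span G"
  proof (rule subspace_dim_equal[OF N subspace_span])
    show "N \<subseteq> span G" unfolding G_def by (rule fixed_subspace_subset_span_eigenvectors[OF sym E fixed q1])
    show "dim (span G) \<le> dim N"
      using eigenbasis_card_gt_mu_le[OF E mu] dim_span_eq_card_independent[OF indep] by (simp add: G_def)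
  qed
  hence yG: "u \<bullet> y = 0" if "u \<in> G" for u using y that span_base by blast
  have "y \<bullet> (P *v y) = (\<Sum>u\<in>U. lam u * (u \<bullet> y)^2)" by (rule eigenbasis_quadratic_form[OF E])
  also have "\<dots> \<le> (\<Sum>u\<in>U. q * (u \<bullet> y)^2)"
  proof (rule sum_mono)
    fix u assume u: "u \<in> U"
    show "lam u * (u \<bullet> y)^2 \<le> q * (u \<bullet> y)^2"
    proof (cases "q < lam u")
      case True
      then show ?thesis using yG u by (simp add: G_def)
    next
      case False
      then show ?thesis by (intro mult_right_mono) auto
    qed
  qed
  also have "\<dots> = q * (y \<bullet> y)"
    by (simp add: orthonormal_basis_inner_self[OF U] sum_distrib_left)
  finally show ?thesis .
qed

section \<open>Switching networks\<close>

lemma Phi_same: "Phi W tk k k = mat 1"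
  unfolding Phi_def by simp

lemma Phi_Suc:
  "k1 \<le> k2 \<Longrightarrow>
    Phi W tk (Suc k2) k1 = mexp (- ((tk (Suc k2) - tk k2) *\<^sub>R lap (W (tk k2)))) ** Phi W tk k2 k1"
  unfolding Phi_def by simp

lemma subspace_null_space: "subspace (null_space (M::real^'k::finite^'k))"
  unfolding null_space_def subspace_def
  by (simp add: matrix_vector_right_distrib matrix_vector_mult_scaleR)

lemma interval_containing:
  fixes f :: "nat \<Rightarrow> 'a::linorder"
  assumes "f 0 \<le> t" "t < f K"
  obtains k where "f k \<le> t" "t < f (Suc k)"
proof -
  define K0 where "K0 = (LEAST n. t < f n)"
  have K0: "t < f K0" unfolding K0_def by (rule LeastI[of _ K]) (rule assms(2))
  then obtain k where k: "K0 = Suc k" using assms(1) by (cases K0) auto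
  have "\<not> t < f k" using not_less_Least[of k "\<lambda>n. t < f n"] k unfolding K0_def by simp
  thus thesis using that[of k] K0 k by (simp add: not_less)
qed

locale switching_network =
  fixes W :: "real \<Rightarrow> 'n::finite \<Rightarrow> 'n \<Rightarrow> real^'d::finite^'d"
    and tk :: "nat \<Rightarrow> real" and x :: "real \<Rightarrow> real^('n \<times> 'd)"
  assumes W_sym: "\<And>t i j. t \<ge> 0 \<Longrightarrow> transpose (W t i j) = W t i j"
    and W_swap: "\<And>t i j. t \<ge> 0 \<Longrightarrow> W t i j = W t j i"
    and W_sign: "\<And>t i j. t \<ge> 0 \<Longrightarrow> psd (W t i j) \<or> nsd (W t i j)"
    and tk0: "tk 0 = 0"
    and tk_less: "\<And>k. tk k < tk (Suc k)"
    and tk_unbounded: "filterlim tk at_top sequentially"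
    and piecewise: "\<And>k t. tk k \<le> t \<Longrightarrow> t < tk (Suc k) \<Longrightarrow> W t = W (tk k)"
    and x_cont: "continuous_on {0..} x"
    and x_ode: "\<And>t. t \<ge> 0 \<Longrightarrow> (x has_vector_derivative (- (lap (W t) *v x t))) (at t within {t..})"
begin

abbreviation L :: "nat \<Rightarrow> real^('n \<times> 'd)^('n \<times> 'd)" where
  "L k \<equiv> lap (W (tk k))"

lemma tk_strict_mono: "strict_mono tk"
  using tk_less by (rule strict_monoI_Suc)

lemma tk_nonneg: "tk k \<ge> 0"
  using strict_mono_less_eq[OF tk_strict_mono, of 0 k] tk0 by simp

lemma L_symmetric: "transpose (L k) = L k"
  using W_sym W_swap tk_nonneg by (intro lap_symmetric) auto

lemma L_psd: "0 \<le> v \<bullet> (L k *v v)"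
  using W_sym W_swap W_sign tk_nonneg by (intro lap_quadratic_form_nonneg) auto

lemma switching_interval:
  assumes "t \<ge> 0"
  obtains k where "tk k \<le> t" "t < tk (Suc k)"
proof -
  obtain K where "t < tk K"
    using tk_unbounded by (metis filterlim_at_top_dense eventually_sequentially order.refl)
  then show thesis using interval_containing[of tk t K] that assms tk0 by auto
qed

lemma solution_on_interval:
  assumes "tk k \<le> t" "t \<le> tk (Suc k)"
  shows "x t = mexp (- ((t - tk k) *\<^sub>R L k)) *v x (tk k)"
proof (rule linear_ode_solution[OF L_symmetric _ _ assms])
  show "continuous_on {tk k..tk (Suc k)} x"
    by (rule continuous_on_subset[OF x_cont]) (use tk_nonneg in auto)
  fix s assume s: "tk k \<le> s" "s < tk (Suc k)"
  then show "(x has_vector_derivative - (L k *v x s)) (at s within {s..})"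
    using x_ode[of s] piecewise[OF s] tk_nonneg[of k] by simp
qed

lemma Phi_solution: "k1 \<le> k2 \<Longrightarrow> Phi W tk k2 k1 *v x (tk k1) = x (tk k2)"
proof (induction k2 rule: dec_induct)
  case (step k2)
  then show ?case
    using solution_on_interval[of k2 "tk (Suc k2)"] tk_less[of k2]
    by (simp add: Phi_Suc matrix_vector_mul_assoc[symmetric])
qed (simp add: Phi_same)

lemma lap_has_integral:
  "k1 \<le> k2 \<Longrightarrow>
    ((\<lambda>t. lap (W t)) has_integral (\<Sum>k\<in>{k1..<k2}. (tk (Suc k) - tk k) *\<^sub>R L k)) {tk k1..tk k2}"
proof (induction k2 rule: dec_induct)
  case base
  show ?case using has_integral_refl(2)[of "\<lambda>t. lap (W t)" "tk k1"] by simp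
next
  case (step k2)
  have const: "((\<lambda>t. L k2) has_integral (tk (Suc k2) - tk k2) *\<^sub>R L k2) {tk k2..tk (Suc k2)}"
    using has_integral_const_real[of "L k2" "tk k2" "tk (Suc k2)"] tk_less[of k2] by simp
  have "((\<lambda>t. lap (W t)) has_integral (tk (Suc k2) - tk k2) *\<^sub>R L k2) {tk k2..tk (Suc k2)}"
  proof (rule has_integral_spike_finite[OF _ _ const])
    fix t assume "t \<in> {tk k2..tk (Suc k2)} - {tk (Suc k2)}"
    then show "lap (W t) = L k2" using piecewise by auto
  qed simp
  from has_integral_combine[OF _ _ step.IH this] step.hyps
  show ?case
    using strict_mono_less_eq[OF tk_strict_mono] tk_less[of k2] by (simp add: add.commute less_imp_le)
qed

lemma null_space_Ltilde_imp_null: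
  assumes "k1 < k2" and v: "v \<in> null_space (Ltilde W (tk k1) (tk k2))" and k: "k1 \<le> k" "k < k2"
  shows "L k *v v = 0"
proof -
  define S where "S = (\<Sum>k\<in>{k1..<k2}. (tk (Suc k) - tk k) *\<^sub>R L k)"
  have gap: "tk k1 < tk k2" using assms(1) tk_strict_mono by (simp add: strict_mono_less)
  have "Ltilde W (tk k1) (tk k2) = (1 / (tk k2 - tk k1)) *\<^sub>R S"
    unfolding Ltilde_def S_def using lap_has_integral[of k1 k2] assms(1) by (simp add: integral_unique)
  hence "S *v v = 0"
    using v gap unfolding null_space_def by (simp add: scaleR_matrix_vector_mult)
  hence "v \<bullet> (S *v v) = 0" by simp
  hence "(\<Sum>k\<in>{k1..<k2}. (tk (Suc k) - tk k) * (v \<bullet> (L k *v v))) = 0"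
    unfolding S_def by (simp add: matrix_vector_mult_sum_left scaleR_matrix_vector_mult inner_sum_right)
  moreover have "(tk (Suc k) - tk k) * (v \<bullet> (L k *v v)) \<ge> 0" for k
    using L_psd tk_less[of k] by simp
  ultimately have "(tk (Suc k) - tk k) * (v \<bullet> (L k *v v)) = 0"
    using k by (subst (asm) sum_nonneg_eq_0_iff) auto
  hence "v \<bullet> (L k *v v) = 0" using tk_less[of k] by simp
  thus ?thesis by (rule psd_quadratic_form_zero_imp_null[OF L_symmetric L_psd])
qed

lemma common_null_space_imp_null:
  assumes kl: "strict_mono kl" "kl 0 = 0"
    and windows: "\<And>l. null_space (Ltilde W (tk (kl l)) (tk (kl (Suc l)))) = N"
    and v: "v \<in> N"
  shows "L k *v v = 0"
proof -
  have "k < kl (Suc k)" using seq_suble[OF kl(1), of "Suc k"] by simp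
  then obtain l where "kl l \<le> k" "k < kl (Suc l)"
    using interval_containing[of kl k "Suc k"] kl(2) by auto
  then show ?thesis
    using null_space_Ltilde_imp_null[of "kl l" "kl (Suc l)"] windows[of l] v by simp
qed

context
  fixes N :: "(real^('n \<times> 'd)) set"
  assumes N_subspace: "subspace N" and N_null: "\<And>k v. v \<in> N \<Longrightarrow> L k *v v = 0"
begin

lemma flow_fixes_N: "v \<in> N \<Longrightarrow> mexp (- (s *\<^sub>R L k)) *v v = v"
  using mexp_fixes_null_space[OF L_symmetric N_null, where c = "- s"] by simp

lemma flow_preserves_inner_N: "v \<in> N \<Longrightarrow> v \<bullet> (mexp (- (s *\<^sub>R L k)) *v y) = v \<bullet> y"
  using mexp_symmetric_inner[OF L_symmetric, of v "- s" k y] flow_fixes_N by simp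

lemma inner_N_conserved:
  assumes v: "v \<in> N" and t: "t \<ge> 0"
  shows "v \<bullet> x t = v \<bullet> x 0"
proof -
  have at_switch: "v \<bullet> x (tk k) = v \<bullet> x 0" for k
  proof (induction k)
    case (Suc k)
    then show ?case
      using solution_on_interval[of k "tk (Suc k)"] tk_less[of k] flow_preserves_inner_N[OF v] by simp
  qed (simp add: tk0)
  obtain k where "tk k \<le> t" "t < tk (Suc k)" using switching_interval[OF t] .
  then show ?thesis
    using solution_on_interval[of k t] flow_preserves_inner_N[OF v] at_switch by simp
qed

lemma Phi_fixes_N:
  assumes v: "v \<in> N" and k: "k1 \<le> k2"
  shows "Phi W tk k2 k1 *v v = v"
  using k
proof (induction k2 rule: dec_induct)
  case (step k2)
  then show ?case using flow_fixes_N[OF v] by (simp add: Phi_Suc matrix_vector_mul_assoc[symmetric])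
qed (simp add: Phi_same)

lemma transpose_Phi_fixes_N:
  assumes v: "v \<in> N" and k: "k1 \<le> k2"
  shows "transpose (Phi W tk k2 k1) *v v = v"
proof -
  have "v \<bullet> (Phi W tk k2 k1 *v y) = v \<bullet> y" for y
    using k
  proof (induction k2 rule: dec_induct)
    case (step k2)
    then show ?case using flow_preserves_inner_N[OF v]
      by (simp add: Phi_Suc matrix_vector_mul_assoc[symmetric])
  qed (simp add: Phi_same)
  hence "(transpose (Phi W tk k2 k1) *v v) \<bullet> y = v \<bullet> y" for y
    by (simp add: dot_lmul_matrix)
  thus ?thesis using vector_eq_rdot by blast
qed

context
  fixes p :: "real^('n \<times> 'd)"
  assumes p_in: "p \<in> N" and p_proj: "\<And>v. v \<in> N \<Longrightarrow> v \<bullet> (x 0 - p) = 0"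
begin

lemma residual_orthogonal:
  assumes "v \<in> N" "t \<ge> 0"
  shows "v \<bullet> (x t - p) = 0"
  using inner_N_conserved[OF assms] p_proj[OF assms(1)] by (simp add: inner_diff_right)

lemma residual_norm_le:
  assumes "tk k \<le> t"
  shows "norm (x t - p) \<le> norm (x (tk k) - p)"
proof -
  have on_interval: "norm (x t - p) \<le> norm (x (tk k) - p)"
    if "tk k \<le> t" "t \<le> tk (Suc k)" for k t
  proof -
    have "x t - p = mexp (- ((t - tk k) *\<^sub>R L k)) *v (x (tk k) - p)"
      using solution_on_interval[OF that] flow_fixes_N[OF p_in] by (simp add: matrix_vector_mult_diff_distrib)
    thus ?thesis using that by (simp add: mexp_psd_norm_le[OF L_symmetric L_psd])
  qed
  have at_switch: "norm (x (tk k') - p) \<le> norm (x (tk k) - p)" if "k \<le> k'" for k k'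
    using that
  proof (induction k' rule: dec_induct)
    case (step k')
    then show ?case using on_interval[of k' "tk (Suc k')"] tk_less[of k'] by simp
  qed simp
  have "t \<ge> 0" using tk_nonneg[of k] assms by linarith
  then obtain k' where k': "tk k' \<le> t" "t < tk (Suc k')" by (rule switching_interval)
  have "k \<le> k'"
    using assms k' strict_mono_less[OF tk_strict_mono, of k "Suc k'"] by simp
  then show ?thesis using on_interval[of k' t] at_switch[of k k'] k' by simp
qed

lemma residual_contraction:
  assumes k: "k1 \<le> k2" and mu: "mu (dim N + 1) (transpose (Phi W tk k2 k1) ** Phi W tk k2 k1) \<le> q"
    and q1: "q < 1"
  shows "(norm (x (tk k2) - p))^2 \<le> q * (norm (x (tk k1) - p))^2"
proof -
  define Ph where "Ph = Phi W tk k2 k1"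
  define y where "y = x (tk k1) - p"
  have image: "Ph *v y = x (tk k2) - p"
    unfolding Ph_def y_def using Phi_solution[OF k] Phi_fixes_N[OF p_in k]
    by (simp add: matrix_vector_mult_diff_distrib)
  have "y \<bullet> ((transpose Ph ** Ph) *v y) \<le> q * (y \<bullet> y)"
  proof (rule quadratic_form_le_on_orthogonal_complement[OF _ N_subspace _ _ q1])
    show "transpose (transpose Ph ** Ph) = transpose Ph ** Ph" by (simp add: matrix_transpose_mul)
    show "(transpose Ph ** Ph) *v v = v" if "v \<in> N" for v
      unfolding Ph_def using that k Phi_fixes_N transpose_Phi_fixes_N
      by (simp add: matrix_vector_mul_assoc[symmetric])
    show "mu (dim N + 1) (transpose Ph ** Ph) \<le> q" using mu unfolding Ph_def .
    show "v \<bullet> y = 0" if "v \<in> N" for v unfolding y_def using residual_orthogonal[OF that tk_nonneg] .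
  qed
  moreover have "y \<bullet> ((transpose Ph ** Ph) *v y) = (Ph *v y) \<bullet> (Ph *v y)"
    by (simp add: matrix_vector_mul_assoc[symmetric] dot_lmul_matrix[symmetric] inner_commute)
  ultimately have "(Ph *v y) \<bullet> (Ph *v y) \<le> q * (y \<bullet> y)" by simp
  then show ?thesis unfolding image by (simp add: y_def power2_norm_eq_inner)
qed

lemma tendsto_projection:
  assumes kl: "strict_mono kl" "kl 0 = 0" and q: "0 < q" "q < 1"
    and mu: "\<And>l. mu (dim N + 1) (transpose (Phi W tk (kl (Suc l)) (kl l)) ** Phi W tk (kl (Suc l)) (kl l)) \<le> q"
  shows "(x \<longlongrightarrow> p) at_top"
proof (rule tendstoI)
  fix e :: real assume e: "e > 0"
  define R where "R = (norm (x 0 - p))^2"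
  have geometric: "(norm (x (tk (kl l)) - p))^2 \<le> q ^ l * R" for l
  proof (induction l)
    case 0 then show ?case using kl(2) tk0 by (simp add: R_def)
  next
    case (Suc l)
    have "kl l \<le> kl (Suc l)" using kl(1) by (simp add: strict_mono_leD)
    from residual_contraction[OF this mu q(2)]
    have "(norm (x (tk (kl (Suc l))) - p))^2 \<le> q * (norm (x (tk (kl l)) - p))^2" .
    also have "\<dots> \<le> q * (q ^ l * R)" using Suc q(1) by (intro mult_left_mono) auto
    finally show ?case by simp
  qed
  have "e^2 / (R + 1) > 0" using e by (simp add: R_def add_nonneg_pos)
  then obtain l where l: "q ^ l < e^2 / (R + 1)" using real_arch_pow_inv[OF _ q(2)] by blast
  have "q ^ l * R \<le> q ^ l * (R + 1)" using q(1) by simp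
  also have "\<dots> < e^2" using l by (simp add: R_def pos_less_divide_eq add_nonneg_pos)
  finally have "(norm (x (tk (kl l)) - p))^2 < e^2" using geometric[of l] by simp
  hence small: "norm (x (tk (kl l)) - p) < e" using e by (simp add: power_less_imp_less_base)
  have "dist (x t) p < e" if "t \<ge> tk (kl l)" for t
    using residual_norm_le[OF that] small by (simp add: dist_norm)
  then show "\<forall>\<^sub>F t in at_top. dist (x t) p < e" unfolding eventually_at_top_linorder by blast
qed

end

lemma tendsto_orthonormal_projection:
  assumes B: "finite B" "pairwise orthogonal B" "\<forall>b\<in>B. norm b = 1" "span B = N"
    and kl: "strict_mono kl" "kl 0 = 0" and q: "0 < q" "q < 1"
    and mu: "\<And>l. mu (dim N + 1) (transpose (Phi W tk (kl (Suc l)) (kl l)) ** Phi W tk (kl (Suc l)) (kl l)) \<le> q"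
  shows "(x \<longlongrightarrow> (\<Sum>b\<in>B. (b \<bullet> x 0) *\<^sub>R b)) at_top"
proof (rule tendsto_projection[OF _ _ kl q mu])
  show "(\<Sum>b\<in>B. (b \<bullet> x 0) *\<^sub>R b) \<in> N"
    unfolding B(4)[symmetric] by (intro span_sum span_scale span_base)
  show "v \<bullet> (x 0 - (\<Sum>b\<in>B. (b \<bullet> x 0) *\<^sub>R b)) = 0" if "v \<in> N" for v
    using orthonormal_projection_residual_orthogonal[OF B(1-3)] B(4) that by simp
qed

end

end

lemma tendsto_imp_cluster_consensus:
  fixes x :: "real \<Rightarrow> real^('n::finite \<times> 'd::finite)"
  assumes "(x \<longlongrightarrow> p) at_top"
  shows "cluster_consensus x"
proof -
  have "((\<lambda>t. block (x t) i) \<longlongrightarrow> block p i) at_top" for i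
    unfolding block_def by (intro tendsto_vec_lambda tendsto_vec_nth assms)
  moreover have "partition_on UNIV ((\<lambda>i. {j. block p j = block p i}) ` UNIV)"
    unfolding partition_on_def disjoint_def by auto
  ultimately show ?thesis unfolding cluster_consensus_def by fastforce
qed

theorem theorem11:
  fixes W :: "real \<Rightarrow> 'n::finite \<Rightarrow> 'n \<Rightarrow> real^'d::finite^'d"
    and tk :: "nat \<Rightarrow> real" and \<alpha> :: real
    and kl :: "nat \<Rightarrow> nat" and q :: real
    and x :: "real \<Rightarrow> real^('n \<times> 'd)"
  assumes n_gt1: "CARD('n) \<ge> 2"
    and W_sym: "\<And>t i j. t \<ge> 0 \<Longrightarrow> transpose (W t i j) = W t i j"
    and W_swap: "\<And>t i j. t \<ge> 0 \<Longrightarrow> W t i j = W t j i"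
    and W_diag: "\<And>t i. t \<ge> 0 \<Longrightarrow> W t i i = 0"
    and W_sign: "\<And>i j. (\<forall>t\<ge>0. psd (W t i j)) \<or> (\<forall>t\<ge>0. nsd (W t i j))"
    and tk0: "tk 0 = 0"
    and alpha_pos: "\<alpha> > 0"
    and dwell: "\<And>k. tk (Suc k) - tk k \<ge> \<alpha>"
    and tk_inf: "filterlim tk at_top sequentially"
    and piecewise: "\<And>k t. tk k \<le> t \<Longrightarrow> t < tk (Suc k) \<Longrightarrow> W t = W (tk k)"
    and kl_mono: "strict_mono kl"
    and kl0: "kl 0 = 0"
    and q: "0 < q" "q < 1"
    and null_eq: "\<And>l. null_space (Ltilde W (tk (kl l)) (tk (kl (Suc l))))
                      = null_space (Ltilde W (tk (kl (Suc l))) (tk (kl (Suc (Suc l)))))"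
    and contr: "\<And>l. mu (dim (null_space (Ltilde W (tk (kl l)) (tk (kl (Suc l))))) + 1)
                      (transpose (Phi W tk (kl (Suc l)) (kl l)) ** Phi W tk (kl (Suc l)) (kl l)) \<le> q"
    and x_cont: "continuous_on {0..} x"
    and x_ode: "\<And>t. t \<ge> 0 \<Longrightarrow> (x has_vector_derivative (- (lap (W t) *v x t))) (at t within {t..})"
  shows "cluster_consensus x \<and>
         (\<forall>B. finite B \<and> pairwise orthogonal B \<and> (\<forall>b\<in>B. norm b = 1) \<and>
              span B = null_space (Ltilde W (tk (kl 0)) (tk (kl 1)))
            \<longrightarrow> (x \<longlongrightarrow> (\<Sum>b\<in>B. (b \<bullet> x 0) *\<^sub>R b)) at_top)"
proof -
  have tk_less: "tk k < tk (Suc k)" for k using dwell[of k] alpha_pos by linarith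
  have W_sign': "psd (W t i j) \<or> nsd (W t i j)" if "t \<ge> 0" for t i j using W_sign[of i j] that by blast
  interpret switching_network W tk x
    by unfold_locales (fact W_sym W_swap W_sign' tk0 tk_less tk_inf piecewise x_cont x_ode)+
  define N where "N = null_space (Ltilde W (tk (kl 0)) (tk (kl 1)))"
  have N_subspace: "subspace N" unfolding N_def by (rule subspace_null_space)
  have windows: "null_space (Ltilde W (tk (kl l)) (tk (kl (Suc l)))) = N" for l
    unfolding N_def by (induction l) (simp_all add: null_eq[symmetric])
  have N_null: "L k *v v = 0" if "v \<in> N" for k v
    using common_null_space_imp_null[OF kl_mono kl0 windows that] .
  have mu: "mu (dim N + 1) (transpose (Phi W tk (kl (Suc l)) (kl l)) ** Phi W tk (kl (Suc l)) (kl l)) \<le> q"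
    for l using contr[of l] by (simp only: windows)
  have limit: "(x \<longlongrightarrow> (\<Sum>b\<in>B. (b \<bullet> x 0) *\<^sub>R b)) at_top"
    if "finite B" "pairwise orthogonal B" "\<forall>b\<in>B. norm b = 1" "span B = N" for B
    using tendsto_orthonormal_projection[OF N_subspace N_null that kl_mono kl0 q mu] .
  obtain B0 where B0: "B0 \<subseteq> N" "pairwise orthogonal B0" "\<And>b. b \<in> B0 \<Longrightarrow> norm b = 1"
      "independent B0" "card B0 = dim N" "span B0 = N"
    by (rule orthonormal_basis_subspace[OF N_subspace]) blast
  have "(x \<longlongrightarrow> (\<Sum>b\<in>B0. (b \<bullet> x 0) *\<^sub>R b)) at_top"
    using B0 by (intro limit independent_imp_finite) auto
  then have "cluster_consensus x" by (rule tendsto_imp_cluster_consensus)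
  then show ?thesis using limit unfolding N_def[symmetric] by blast
qed

end
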